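(* Let $R:\mathbb R^N\to\mathbb R\cup\{+\infty\}$ be a polyhedral function of the form $$R(x)=\max_{i=1,\dots,k}\{\langle a_i,x\rangle-\alpha_i\}+\iota_{\bigcap_{i=k+1}^m\{x:\langle a_i,x\rangle-\alpha_i\le0\}}(x),$$ with $1\le k\le m$, $a_i\in\mathbb R^N$, $\alpha_i\in\mathbb R$, and $\mathrm{dom}(R)\neq\emptyset$. For $x\in\mathrm{dom}(R)$ let $I^{\max}(x)=\{i\in\{1,\dots,k\}:\langle a_i,x\rangle-\alpha_i=R(x)\}$, $I^{\mathrm{feas}}(x)=\{i\in\{k+1,\dots,m\}:\langle a_i,x\rangle=\alpha_i\}$, and for $I\subset\{1,\dots,m\}$ set $M_I=\{x\in\mathrm{dom}(R):I^{\max}(x)\cup I^{\mathrm{feas}}(x)=I\}$ and $M_I^*=\mathrm{ri}(\mathrm{conv}\{a_i:i\in I\cap\{1,\dots,k\}\})+\mathrm{ri}(\mathrm{cone}\{a_i:i\in I\cap\{k+1,\dots,m\}\})$ (with $\mathrm{cone}\,\emptyset=\{0\}$). Then $\{M_I: M_I\neq\emptyset\}$ is a stratification of $\mathrm{dom}(R)$, $J_R(M_I)=M_I^*$ and $J_{R^*}(M_I^* )=M_I$ whenever $M_I\neq\emptyset$, and $R$ is mirror-stratifiable with respect to $\{M_I\}_{M_I\ne\emptyset}$ and $\{M_I^*\}_{M_I\ne\emptyset}$.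
   Context: $\iota_C$ denotes the indicator function of $C$ (0 on $C$, $+\infty$ outside); $\mathrm{ri}$ is the relative interior, $\mathrm{conv}$ the convex hull, $\mathrm{cone}$ the convex conic hull. A stratification of a set $D$ is a finite partition $\mathcal S$ of $D$ into nonempty sets called strata such that for any strata $M,M'$, $M\cap\mathrm{cl}(M')\neq\emptyset$ implies $M\subset\mathrm{cl}(M')$; ordered by $M\le M'$ iff $M\subset\mathrm{cl}(M')$. For a proper lsc convex $R$ with conjugate $R^*$, $J_R(S)=\bigcup_{x\in S}\mathrm{ri}(\partial R(x))$ and $J_{R^*}$ analogously. $R$ is mirror-stratifiable with respect to a stratification $\mathcal S$ of $\mathrm{dom}(\partial R)$ and a stratification $\mathcal S^*$ of $\mathrm{dom}(\partial R^* )$ if (i) $J_R$ maps $\mathcal S$ bijectively onto $\mathcal S^*$ with inverse $J_{R^*}$, i.e. for all $M\in\mathcal S$, $M^*\in\mathcal S^*$: $M^*=J_R(M)\iff J_{R^*}(M^* )=M$; and (ii) for all $M,M'\in\mathcal S$: $M\le M'\iff J_R(M)\ge J_R(M')$. *)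

theory Defs
  imports "HOL-Analysis.Analysis"
begin

text \<open>Convex conic hull: smallest convex cone containing S and 0 (so it is {0} for S empty).\<close>
definition ccone :: "'a::real_vector set \<Rightarrow> 'a set" where
  "ccone S = (\<lambda>T. convex T \<and> cone T \<and> 0 \<in> T) hull S"

definition subdiff :: "('a::real_inner \<Rightarrow> ereal) \<Rightarrow> 'a \<Rightarrow> 'a set" where
  "subdiff f x = (if \<bar>f x\<bar> \<noteq> \<infinity> then {g. \<forall>y. f y \<ge> f x + ereal (g \<bullet> (y - x))} else {})"

definition dom_subdiff :: "('a::real_inner \<Rightarrow> ereal) \<Rightarrow> 'a set" where
  "dom_subdiff f = {x. subdiff f x \<noteq> {}}"

definition fconj :: "('a::real_inner \<Rightarrow> ereal) \<Rightarrow> 'a \<Rightarrow> ereal" where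
  "fconj f v = (SUP x. ereal (v \<bullet> x) - f x)"

definition JJ :: "('a::euclidean_space \<Rightarrow> ereal) \<Rightarrow> 'a set \<Rightarrow> 'a set" where
  "JJ f S = (\<Union>x\<in>S. rel_interior (subdiff f x))"

definition is_stratification :: "'a::topological_space set \<Rightarrow> 'a set set \<Rightarrow> bool" where
  "is_stratification D \<S> \<longleftrightarrow>
     finite \<S> \<and> (\<forall>M\<in>\<S>. M \<noteq> {}) \<and> \<Union>\<S> = D \<and>
     (\<forall>M\<in>\<S>. \<forall>M'\<in>\<S>. M \<noteq> M' \<longrightarrow> M \<inter> M' = {}) \<and>
     (\<forall>M\<in>\<S>. \<forall>M'\<in>\<S>. M \<inter> closure M' \<noteq> {} \<longrightarrow> M \<subseteq> closure M')"

definition mirror_stratifiable ::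
  "('a::euclidean_space \<Rightarrow> ereal) \<Rightarrow> 'a set set \<Rightarrow> 'a set set \<Rightarrow> bool" where
  "mirror_stratifiable R \<S> \<S>s \<longleftrightarrow>
     is_stratification (dom_subdiff R) \<S> \<and>
     is_stratification (dom_subdiff (fconj R)) \<S>s \<and>
     bij_betw (JJ R) \<S> \<S>s \<and>
     (\<forall>M\<in>\<S>. \<forall>Ms\<in>\<S>s. Ms = JJ R M \<longleftrightarrow> JJ (fconj R) Ms = M) \<and>
     (\<forall>M\<in>\<S>. \<forall>M'\<in>\<S>. M \<subseteq> closure M' \<longleftrightarrow> JJ R M' \<subseteq> closure (JJ R M))"

definition polyR :: "nat \<Rightarrow> nat \<Rightarrow> (nat \<Rightarrow> 'a::euclidean_space) \<Rightarrow> (nat \<Rightarrow> real) \<Rightarrow> 'a \<Rightarrow> ereal" where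
  "polyR k m a \<alpha> x =
     (if \<forall>i\<in>{k+1..m}. a i \<bullet> x - \<alpha> i \<le> 0
      then ereal (Max ((\<lambda>i. a i \<bullet> x - \<alpha> i) ` {1..k})) else \<infinity>)"

definition edom :: "('a \<Rightarrow> ereal) \<Rightarrow> 'a set" where
  "edom f = {x. f x < \<infinity>}"

definition Imax :: "nat \<Rightarrow> nat \<Rightarrow> (nat \<Rightarrow> 'a::euclidean_space) \<Rightarrow> (nat \<Rightarrow> real) \<Rightarrow> 'a \<Rightarrow> nat set" where
  "Imax k m a \<alpha> x = {i\<in>{1..k}. ereal (a i \<bullet> x - \<alpha> i) = polyR k m a \<alpha> x}"

definition Ifeas :: "nat \<Rightarrow> nat \<Rightarrow> (nat \<Rightarrow> 'a::euclidean_space) \<Rightarrow> (nat \<Rightarrow> real) \<Rightarrow> 'a \<Rightarrow> nat set" where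
  "Ifeas k m a \<alpha> x = {i\<in>{k+1..m}. a i \<bullet> x = \<alpha> i}"

definition MI :: "nat \<Rightarrow> nat \<Rightarrow> (nat \<Rightarrow> 'a::euclidean_space) \<Rightarrow> (nat \<Rightarrow> real) \<Rightarrow> nat set \<Rightarrow> 'a set" where
  "MI k m a \<alpha> I = {x\<in>edom (polyR k m a \<alpha>). Imax k m a \<alpha> x \<union> Ifeas k m a \<alpha> x = I}"

definition MIs :: "nat \<Rightarrow> nat \<Rightarrow> (nat \<Rightarrow> 'a::euclidean_space) \<Rightarrow> nat set \<Rightarrow> 'a set" where
  "MIs k m a I = {u + v | u v. u \<in> rel_interior (convex hull (a ` (I \<inter> {1..k}))) \<and>
                              v \<in> rel_interior (ccone (a ` (I \<inter> {k+1..m})))}"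

end

theory Submission
  imports Defs
begin

text \<open>
  On its domain R is the maximum of the affine pieces \<open>\<langle>a\<^sub>i, x\<rangle> - \<alpha>\<^sub>i\<close>, \<open>i \<le> k\<close>, and its
  subdifferential at x is generated by the indices active at x: \<open>\<partial>R(x)\<close> is the convex hull of the
  active \<open>a\<^sub>i\<close>, \<open>i \<le> k\<close>, plus the cone of the active \<open>a\<^sub>j\<close>, \<open>j > k\<close>; its relative interior is
  \<open>M\<^sup>*\<^sub>I\<close> for \<open>I = I(x)\<close>. Conversely, for v in \<open>M\<^sup>*\<^sub>K\<close>, written with strictly positive weights,
  the Fenchel-Young gap \<open>R(y) + R\<^sup>*(v) - \<langle>v, y\<rangle>\<close> is a positive combination of the slacks of the
  indices in K, so \<open>\<partial>R\<^sup>*(v)\<close> is the face of points where all of K is active, whose relative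
  interior is \<open>M\<^sub>K\<close>. Every v with \<open>\<partial>R\<^sup>*(v) \<noteq> {}\<close> lies in some \<open>M\<^sup>*\<^sub>K\<close>: take z in
  \<open>\<partial>R\<^sup>*(v)\<close> with the fewest active indices; if v were on the relative boundary of \<open>\<partial>R(z)\<close>,
  moving z along the supporting direction would stay in \<open>\<partial>R\<^sup>*(v)\<close> and force that direction to be
  constant on \<open>\<partial>R(z)\<close>. Both closure orders then reduce to inclusion of index sets.
\<close>

lemma ccone_eq_convex_cone_hull: "ccone S = convex_cone hull S"
proof -
  have "(\<lambda>T. convex T \<and> cone T \<and> 0 \<in> T) = convex_cone"
    by (auto simp: fun_eq_iff convex_cone_def conic_def cone_def) (metis order_refl scaleR_zero_left)
  then show ?thesis
    unfolding ccone_def by (rule arg_cong[where f = "\<lambda>P. P hull S"])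
qed

lemma convex_cone_hull_image_eq_sum_rays:
  assumes "finite A"
  shows "convex_cone hull (a ` A) = (\<Sum>i\<in>A. (\<lambda>t. t *\<^sub>R a i) ` {0..})"
  using assms
proof (induction A rule: finite_induct)
  case (insert i A)
  have "convex_cone hull (a ` insert i A) = convex_cone hull {a i} + convex_cone hull (a ` A)"
    using convex_cone_hull_Un[of "{a i}" "a ` A"] by (simp add: set_plus_def) blast
  also have "convex_cone hull {a i} = (\<lambda>t. t *\<^sub>R a i) ` {0..}"
    by (auto simp: convex_cone_hull_convex_hull_nonempty)
  finally show ?case
    using insert by simp
qed simp

lemma sum_scaled_images_explicit:
  assumes "finite A"
  shows "(\<Sum>i\<in>A. (\<lambda>t. t *\<^sub>R a i) ` T) = {\<Sum>i\<in>A. l i *\<^sub>R a i | l. \<forall>i\<in>A. l i \<in> T}"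
proof (intro set_eqI iffI)
  fix x assume "x \<in> (\<Sum>i\<in>A. (\<lambda>t. t *\<^sub>R a i) ` T)"
  then obtain s where x: "x = sum s A" and s: "\<forall>i\<in>A. \<exists>t\<in>T. s i = t *\<^sub>R a i"
    unfolding set_sum_alt[OF assms] by blast
  then obtain l where "\<forall>i\<in>A. l i \<in> T \<and> s i = l i *\<^sub>R a i"
    by metis
  then show "x \<in> {\<Sum>i\<in>A. l i *\<^sub>R a i | l. \<forall>i\<in>A. l i \<in> T}"
    unfolding x by (auto intro!: exI[of _ l] sum.cong)
qed (auto simp: set_sum_alt[OF assms])

lemma convex_cone_hull_image_explicit:
  assumes "finite A"
  shows "convex_cone hull (a ` A) = {\<Sum>i\<in>A. l i *\<^sub>R a i | l. \<forall>i\<in>A. 0 \<le> l i}"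
  by (simp add: convex_cone_hull_image_eq_sum_rays sum_scaled_images_explicit assms)

lemma rel_interior_convex_cone_hull_image:
  fixes a :: "'i \<Rightarrow> 'a::euclidean_space"
  assumes "finite A"
  shows "rel_interior (convex_cone hull (a ` A)) = {\<Sum>i\<in>A. l i *\<^sub>R a i | l. \<forall>i\<in>A. 0 < l i}"
proof -
  have ray: "rel_interior ((\<lambda>t. t *\<^sub>R a i) ` {0..}) = (\<lambda>t. t *\<^sub>R a i) ` {0<..}" for i
    using rel_interior_convex_linear_image[OF linear_scale_left[of "a i"], of "{0..}"] by simp
  have "rel_interior (convex_cone hull (a ` A)) = (\<Sum>i\<in>A. rel_interior ((\<lambda>t. t *\<^sub>R a i) ` {0..}))"
    unfolding convex_cone_hull_image_eq_sum_rays[OF assms]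
    by (rule rel_interior_sum_gen) (simp add: convex_linear_image)
  then show ?thesis
    by (simp add: ray sum_scaled_images_explicit assms)
qed

lemma convex_hull_image_explicit:
  fixes a :: "'i \<Rightarrow> 'a::real_vector"
  assumes "finite A"
  shows "convex hull (a ` A) = {\<Sum>i\<in>A. l i *\<^sub>R a i | l. (\<forall>i\<in>A. 0 \<le> l i) \<and> sum l A = 1}"
proof -
  have "a ` A = (\<Union>i\<in>A. {a i})"
    by blast
  then show ?thesis
    using convex_hull_finite_union[of A "\<lambda>i. {a i}"] assms by simp (auto cong: sum.cong)
qed

lemma rel_interior_convex_hull_image:
  fixes a :: "'i \<Rightarrow> 'a::euclidean_space"
  assumes "finite A"
  shows "rel_interior (convex hull (a ` A)) = {\<Sum>i\<in>A. l i *\<^sub>R a i | l. (\<forall>i\<in>A. 0 < l i) \<and> sum l A = 1}"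
proof -
  have "a ` A = (\<Union>i\<in>A. {a i})"
    by blast
  then show ?thesis
    using rel_interior_convex_hull_union[of A "\<lambda>i. {a i}"] assms by simp (auto cong: sum.cong)
qed

lemma weighted_sums_union_disjoint:
  assumes "finite A" "finite B" "A \<inter> B = {}"
  shows "{(\<Sum>i\<in>A. l i *\<^sub>R a i) + (\<Sum>i\<in>B. \<mu> i *\<^sub>R a i) | l \<mu>.
            ((\<forall>i\<in>A. l i \<in> T) \<and> sum l A = 1) \<and> (\<forall>i\<in>B. \<mu> i \<in> T)}
       = {\<Sum>i\<in>A \<union> B. w i *\<^sub>R a i | w. (\<forall>i\<in>A \<union> B. w i \<in> T) \<and> sum w A = 1}"
proof (intro set_eqI iffI)
  fix x assume "x \<in> {(\<Sum>i\<in>A. l i *\<^sub>R a i) + (\<Sum>i\<in>B. \<mu> i *\<^sub>R a i) | l \<mu>.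
            ((\<forall>i\<in>A. l i \<in> T) \<and> sum l A = 1) \<and> (\<forall>i\<in>B. \<mu> i \<in> T)}"
  then obtain l \<mu> where x: "x = (\<Sum>i\<in>A. l i *\<^sub>R a i) + (\<Sum>i\<in>B. \<mu> i *\<^sub>R a i)"
    and lw: "\<forall>i\<in>A. l i \<in> T" "sum l A = 1" and \<mu>w: "\<forall>i\<in>B. \<mu> i \<in> T"
    by blast
  define w where "w i = (if i \<in> A then l i else \<mu> i)" for i
  have "(\<Sum>i\<in>B. \<mu> i *\<^sub>R a i) = (\<Sum>i\<in>B. w i *\<^sub>R a i)"
    using assms(3) by (auto simp: w_def intro!: sum.cong)
  then have "x = (\<Sum>i\<in>A \<union> B. w i *\<^sub>R a i)"
    using assms by (simp add: x sum.union_disjoint w_def)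
  moreover have "sum w A = 1"
    using lw by (simp add: w_def)
  ultimately show "x \<in> {\<Sum>i\<in>A \<union> B. w i *\<^sub>R a i | w. (\<forall>i\<in>A \<union> B. w i \<in> T) \<and> sum w A = 1}"
    using lw \<mu>w by (auto simp: w_def)
qed (auto simp: assms sum.union_disjoint)

lemma subdiff_closed_convex:
  fixes f :: "'a::real_inner \<Rightarrow> ereal"
  shows "closed (subdiff f x) \<and> convex (subdiff f x)"
proof (cases "\<bar>f x\<bar> = \<infinity>")
  case False
  then obtain c where c: "f x = ereal c"
    by (cases "f x") auto
  have "closed {g. f x + ereal (g \<bullet> (y - x)) \<le> f y} \<and> convex {g. f x + ereal (g \<bullet> (y - x)) \<le> f y}"
    for y
  proof (cases "f y")
    case (real r)
    then have "{g. f x + ereal (g \<bullet> (y - x)) \<le> f y} = {g. (y - x) \<bullet> g \<le> r - c}"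
      by (auto simp: c inner_commute)
    then show ?thesis
      by (simp add: closed_halfspace_le convex_halfspace_le)
  qed (simp_all add: c)
  moreover have "subdiff f x = (\<Inter>y. {g. f x + ereal (g \<bullet> (y - x)) \<le> f y})"
    using False by (auto simp: subdiff_def)
  ultimately show ?thesis
    by (auto intro: closed_INT convex_INT)
qed (simp add: subdiff_def)

lemma eventually_at_right_0_mult_less:
  "(\<delta>::real) > 0 \<Longrightarrow> \<forall>\<^sub>F s in at_right 0. s * c < \<delta>"
  by (rule order_tendstoD(2)) (auto intro!: tendsto_eq_intros)

lemma is_stratification_image:
  assumes "finite I" "(\<Union>i\<in>I. S i) = D" "\<And>i. i \<in> I \<Longrightarrow> S i \<noteq> {}"
    and "\<And>i j. i \<in> I \<Longrightarrow> j \<in> I \<Longrightarrow> S i \<inter> S j \<noteq> {} \<Longrightarrow> S i = S j"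
    and "\<And>i j. i \<in> I \<Longrightarrow> j \<in> I \<Longrightarrow> S i \<inter> closure (S j) \<noteq> {} \<Longrightarrow> S i \<subseteq> closure (S j)"
  shows "is_stratification D (S ` I)"
  using assms unfolding is_stratification_def by blast

lemma mirror_stratifiable_image:
  assumes "is_stratification (dom_subdiff f) (S ` I)" "is_stratification (dom_subdiff (fconj f)) (T ` I)"
    and JJ: "\<And>i. i \<in> I \<Longrightarrow> JJ f (S i) = T i" "\<And>i. i \<in> I \<Longrightarrow> JJ (fconj f) (T i) = S i"
    and order: "\<And>i j. i \<in> I \<Longrightarrow> j \<in> I \<Longrightarrow> S i \<subseteq> closure (S j) \<longleftrightarrow> T j \<subseteq> closure (T i)"
  shows "mirror_stratifiable f (S ` I) (T ` I)"
  unfolding mirror_stratifiable_def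
proof (intro conjI assms(1,2))
  show "bij_betw (JJ f) (S ` I) (T ` I)"
    by (rule bij_betw_byWitness[where f' = "JJ (fconj f)"]) (auto simp: JJ)
  show "\<forall>M\<in>S ` I. \<forall>Ms\<in>T ` I. Ms = JJ f M \<longleftrightarrow> JJ (fconj f) Ms = M"
  proof clarify
    fix i j assume "i \<in> I" "j \<in> I"
    then show "T j = JJ f (S i) \<longleftrightarrow> JJ (fconj f) (T j) = S i"
      using JJ by metis
  qed
  show "\<forall>M\<in>S ` I. \<forall>M'\<in>S ` I. M \<subseteq> closure M' \<longleftrightarrow> JJ f M' \<subseteq> closure (JJ f M)"
    using order by (auto simp: JJ)
qed

locale polyhedral_function =
  fixes k m :: nat and a :: "nat \<Rightarrow> 'a::euclidean_space" and \<alpha> :: "nat \<Rightarrow> real"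
  assumes one_le_k: "1 \<le> k" and k_le_m: "k \<le> m"
begin

abbreviation "R \<equiv> polyR k m a \<alpha>"

definition piece :: "nat \<Rightarrow> 'a \<Rightarrow> real" where
  "piece i x = a i \<bullet> x - \<alpha> i"

definition Rmax :: "'a \<Rightarrow> real" where
  "Rmax x = Max ((\<lambda>i. piece i x) ` {1..k})"

definition feasible :: "'a set" where
  "feasible = {x. \<forall>j\<in>{k+1..m}. piece j x \<le> 0}"

definition active :: "'a \<Rightarrow> nat set" where
  "active x = Imax k m a \<alpha> x \<union> Ifeas k m a \<alpha> x"

text \<open>\<open>face K\<close> and \<open>dual_face K\<close> are the closures of the strata \<open>M\<^sub>K\<close> and \<open>M\<^sup>*\<^sub>K\<close>.\<close>

definition face :: "nat set \<Rightarrow> 'a set" where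
  "face K = {y \<in> feasible. K \<subseteq> active y}"

definition dual_face :: "nat set \<Rightarrow> 'a set" where
  "dual_face K = convex hull (a ` (K \<inter> {1..k})) + ccone (a ` (K \<inter> {k+1..m}))"

definition comb :: "nat set \<Rightarrow> (nat \<Rightarrow> real) \<Rightarrow> 'a" where
  "comb K w = (\<Sum>i\<in>K. w i *\<^sub>R a i)"

lemma R_feasible: "x \<in> feasible \<Longrightarrow> R x = ereal (Rmax x)"
  by (simp add: polyR_def feasible_def Rmax_def piece_def)

lemma R_infeasible: "x \<notin> feasible \<Longrightarrow> R x = \<infinity>"
  by (auto simp: polyR_def feasible_def piece_def)

lemma edom_R: "edom R = feasible"
  using R_feasible R_infeasible by (force simp: edom_def)

lemma piece_le_Rmax: "i \<in> {1..k} \<Longrightarrow> piece i x \<le> Rmax x"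
  unfolding Rmax_def by (rule Max_ge) auto

lemma Rmax_attained: "\<exists>i\<in>{1..k}. piece i x = Rmax x"
proof -
  have "Rmax x \<in> (\<lambda>i. piece i x) ` {1..k}"
    unfolding Rmax_def by (rule Max_in) (use one_le_k in auto)
  then show ?thesis
    by auto
qed

lemma Rmax_eqI: "(\<And>i. i \<in> {1..k} \<Longrightarrow> piece i x \<le> c) \<Longrightarrow> i \<in> {1..k} \<Longrightarrow> piece i x = c \<Longrightarrow> Rmax x = c"
  unfolding Rmax_def by (rule Max_eqI) auto

lemma Rmax_le: "(\<And>i. i \<in> {1..k} \<Longrightarrow> piece i x \<le> c) \<Longrightarrow> Rmax x \<le> c"
  using Rmax_attained by metis

lemma active_max_iff: "x \<in> feasible \<Longrightarrow> i \<in> {1..k} \<Longrightarrow> i \<in> active x \<longleftrightarrow> piece i x = Rmax x"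
  by (auto simp: active_def Imax_def Ifeas_def R_feasible piece_def)

lemma active_con_iff: "j \<in> {k+1..m} \<Longrightarrow> j \<in> active x \<longleftrightarrow> piece j x = 0"
  by (auto simp: active_def Imax_def Ifeas_def piece_def)

lemma active_subset: "active x \<subseteq> {1..m}"
  using k_le_m by (auto simp: active_def Imax_def Ifeas_def)

lemma active_max_nonempty: "x \<in> feasible \<Longrightarrow> active x \<inter> {1..k} \<noteq> {}"
  using Rmax_attained active_max_iff by blast

lemma MI_eq: "MI k m a \<alpha> K = {x \<in> feasible. active x = K}"
  by (simp add: MI_def edom_R active_def)

lemma piece_affine: "piece i ((1 - t) *\<^sub>R x + t *\<^sub>R y) = (1 - t) * piece i x + t * piece i y"
  by (simp add: piece_def inner_add_right algebra_simps)

lemma piece_step: "piece i (x + s *\<^sub>R d) = piece i x + s * (a i \<bullet> d)"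
  by (simp add: piece_def inner_add_right)

definition slack :: "nat \<Rightarrow> 'a \<Rightarrow> real" where
  "slack i y = piece i y - (if i \<le> k then Rmax y else 0)"

lemma slack_nonpos: "y \<in> feasible \<Longrightarrow> i \<in> {1..m} \<Longrightarrow> slack i y \<le> 0"
  using piece_le_Rmax[of i y] by (auto simp: slack_def feasible_def)

lemma slack_eq_0_iff: "y \<in> feasible \<Longrightarrow> i \<in> {1..m} \<Longrightarrow> slack i y = 0 \<longleftrightarrow> i \<in> active y"
  using active_max_iff[of y i] active_con_iff[of i y] by (auto simp: slack_def)

lemma comb_gap:
  assumes "K \<subseteq> {1..m}" "sum w (K \<inter> {1..k}) = 1"
  shows "comb K w \<bullet> y - Rmax y - (\<Sum>i\<in>K. w i * \<alpha> i) = (\<Sum>i\<in>K. w i * slack i y)"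
proof -
  have "finite K"
    using assms(1) finite_subset by blast
  then have "(\<Sum>i\<in>K. w i * (if i \<le> k then Rmax y else 0)) = (\<Sum>i\<in>{i \<in> K. i \<le> k}. w i * Rmax y)"
    by (simp add: sum.inter_filter if_distrib[of "(*) (w _)"] cong: if_cong)
  also have "{i \<in> K. i \<le> k} = K \<inter> {1..k}"
    using assms(1) by auto
  finally have "(\<Sum>i\<in>K. w i * (if i \<le> k then Rmax y else 0)) = Rmax y"
    using assms(2) by (simp flip: sum_distrib_right)
  then show ?thesis
    by (simp add: comb_def slack_def piece_def inner_sum_left right_diff_distrib sum_subtractf)
qed

lemma comb_gap_le:
  assumes "y \<in> feasible" "K \<subseteq> {1..m}" "\<forall>i\<in>K. 0 \<le> w i" "sum w (K \<inter> {1..k}) = 1"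
  shows "comb K w \<bullet> y - Rmax y \<le> (\<Sum>i\<in>K. w i * \<alpha> i)"
proof -
  have "(\<Sum>i\<in>K. w i * slack i y) \<le> 0"
    using assms(3) slack_nonpos[OF assms(1) subsetD[OF assms(2)]]
    by (intro sum_nonpos) (simp add: mult_nonneg_nonpos)
  then show ?thesis
    using comb_gap[OF assms(2,4), of y] by simp
qed

lemma comb_gap_eq_iff:
  assumes "y \<in> feasible" "K \<subseteq> {1..m}" "\<forall>i\<in>K. 0 < w i" "sum w (K \<inter> {1..k}) = 1"
  shows "comb K w \<bullet> y - Rmax y = (\<Sum>i\<in>K. w i * \<alpha> i) \<longleftrightarrow> K \<subseteq> active y"
proof -
  have "finite K"
    using assms(2) finite_subset by blast
  moreover have "\<forall>i\<in>K. 0 \<le> - (w i * slack i y)"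
    using assms(3) slack_nonpos[OF assms(1) subsetD[OF assms(2)]]
    by (simp add: mult_nonneg_nonpos less_imp_le)
  ultimately have "(\<Sum>i\<in>K. w i * slack i y) = 0 \<longleftrightarrow> (\<forall>i\<in>K. w i * slack i y = 0)"
    using sum_nonneg_eq_0_iff[of K "\<lambda>i. - (w i * slack i y)"] by (simp add: sum_negf)
  also have "\<dots> \<longleftrightarrow> K \<subseteq> active y"
    using assms(3) slack_eq_0_iff[OF assms(1) subsetD[OF assms(2)]] by force
  finally show ?thesis
    using comb_gap[OF assms(2,4), of y] by linarith
qed

lemma comb_gap_eq:
  assumes "y \<in> feasible" "K \<subseteq> active y" "sum w (K \<inter> {1..k}) = 1"
  shows "comb K w \<bullet> y - Rmax y = (\<Sum>i\<in>K. w i * \<alpha> i)"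
proof -
  have K: "K \<subseteq> {1..m}"
    using assms(2) active_subset by blast
  then have "(\<Sum>i\<in>K. w i * slack i y) = 0"
    using assms(2) slack_eq_0_iff[OF assms(1) subsetD[OF K]] by (intro sum.neutral) auto
  then show ?thesis
    using comb_gap[OF K assms(3), of y] by simp
qed

lemma comb_split:
  assumes "K \<subseteq> {1..m}"
  shows "{(\<Sum>i\<in>K \<inter> {1..k}. l i *\<^sub>R a i) + (\<Sum>i\<in>K \<inter> {k+1..m}. \<mu> i *\<^sub>R a i) | l \<mu>.
            ((\<forall>i\<in>K \<inter> {1..k}. l i \<in> T) \<and> sum l (K \<inter> {1..k}) = 1) \<and> (\<forall>i\<in>K \<inter> {k+1..m}. \<mu> i \<in> T)}
       = {comb K w | w. (\<forall>i\<in>K. w i \<in> T) \<and> sum w (K \<inter> {1..k}) = 1}"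
proof -
  have K: "K \<inter> {1..k} \<union> K \<inter> {k+1..m} = K"
    using assms by auto
  have "K \<inter> {1..k} \<inter> (K \<inter> {k+1..m}) = {}"
    by auto
  then show ?thesis
    using weighted_sums_union_disjoint[where A = "K \<inter> {1..k}" and B = "K \<inter> {k+1..m}"]
    unfolding K comb_def by simp
qed

lemma dual_face_explicit:
  assumes "K \<subseteq> {1..m}"
  shows "dual_face K = {comb K w | w. (\<forall>i\<in>K. 0 \<le> w i) \<and> sum w (K \<inter> {1..k}) = 1}"
proof -
  have "dual_face K = {(\<Sum>i\<in>K \<inter> {1..k}. l i *\<^sub>R a i) + (\<Sum>i\<in>K \<inter> {k+1..m}. \<mu> i *\<^sub>R a i) | l \<mu>.
      ((\<forall>i\<in>K \<inter> {1..k}. l i \<in> {0..}) \<and> sum l (K \<inter> {1..k}) = 1) \<and> (\<forall>i\<in>K \<inter> {k+1..m}. \<mu> i \<in> {0..})}"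
    unfolding dual_face_def ccone_eq_convex_cone_hull set_plus_def
    by (simp add: convex_hull_image_explicit convex_cone_hull_image_explicit) blast
  also have "\<dots> = {comb K w | w. (\<forall>i\<in>K. w i \<in> {0..}) \<and> sum w (K \<inter> {1..k}) = 1}"
    by (rule comb_split[OF assms])
  finally show ?thesis
    by simp
qed

lemma MIs_explicit:
  assumes "K \<subseteq> {1..m}"
  shows "MIs k m a K = {comb K w | w. (\<forall>i\<in>K. 0 < w i) \<and> sum w (K \<inter> {1..k}) = 1}"
proof -
  have "MIs k m a K = {(\<Sum>i\<in>K \<inter> {1..k}. l i *\<^sub>R a i) + (\<Sum>i\<in>K \<inter> {k+1..m}. \<mu> i *\<^sub>R a i) | l \<mu>.
      ((\<forall>i\<in>K \<inter> {1..k}. l i \<in> {0<..}) \<and> sum l (K \<inter> {1..k}) = 1) \<and> (\<forall>i\<in>K \<inter> {k+1..m}. \<mu> i \<in> {0<..})}"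
    unfolding MIs_def ccone_eq_convex_cone_hull
    by (simp add: rel_interior_convex_hull_image rel_interior_convex_cone_hull_image) blast
  also have "\<dots> = {comb K w | w. (\<forall>i\<in>K. w i \<in> {0<..}) \<and> sum w (K \<inter> {1..k}) = 1}"
    by (rule comb_split[OF assms])
  finally show ?thesis
    by simp
qed

lemma convex_dual_face: "convex (dual_face K)"
  unfolding dual_face_def ccone_eq_convex_cone_hull
  by (intro convex_set_plus convex_convex_hull convex_convex_cone_hull)

lemma closed_dual_face: "closed (dual_face K)"
proof -
  have "dual_face K = (\<Union>x\<in>convex hull (a ` (K \<inter> {1..k})). \<Union>y\<in>convex_cone hull (a ` (K \<inter> {k+1..m})). {x + y})"
    unfolding dual_face_def ccone_eq_convex_cone_hull set_plus_def by blast
  then show ?thesis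
    by (simp add: compact_closed_sums compact_convex_hull finite_imp_compact closed_convex_cone_hull)
qed

lemma rel_interior_dual_face: "rel_interior (dual_face K) = MIs k m a K"
  unfolding dual_face_def MIs_def ccone_eq_convex_cone_hull
  by (subst rel_interior_sum) (auto simp: set_plus_def convex_convex_cone_hull)

lemma closure_MIs: "closure (MIs k m a K) = dual_face K"
  using convex_closure_rel_interior[OF convex_dual_face] closed_dual_face
  by (simp add: rel_interior_dual_face)

lemma generator_in_dual_face: "i \<in> K \<inter> {1..k} \<Longrightarrow> a i \<in> dual_face K"
  using set_plus_intro[OF hull_inc convex_cone_hull_contains_0, of "a i" "a ` (K \<inter> {1..k})"]
  by (simp add: dual_face_def ccone_eq_convex_cone_hull)

lemma ray_in_dual_face:
  "i \<in> K \<inter> {1..k} \<Longrightarrow> j \<in> K \<inter> {k+1..m} \<Longrightarrow> 0 \<le> t \<Longrightarrow> a i + t *\<^sub>R a j \<in> dual_face K"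
  unfolding dual_face_def ccone_eq_convex_cone_hull
  by (intro set_plus_intro hull_inc convex_cone_hull_mul) auto

lemma MIs_nonempty: "K \<inter> {1..k} \<noteq> {} \<Longrightarrow> MIs k m a K \<noteq> {}"
  using generator_in_dual_face rel_interior_eq_empty[OF convex_dual_face]
  by (fastforce simp: rel_interior_dual_face)

lemma dual_face_mono: "J \<subseteq> K \<Longrightarrow> dual_face J \<subseteq> dual_face K"
  unfolding dual_face_def ccone_eq_convex_cone_hull
  by (intro set_plus_mono2 hull_mono image_mono) auto

text \<open>The one-sided directional derivative of \<open>Rmax\<close> at x in direction d.\<close>

definition slope :: "'a \<Rightarrow> 'a \<Rightarrow> real" where
  "slope x d = Max ((\<lambda>i. a i \<bullet> d) ` (active x \<inter> {1..k}))"

lemma slope_ge: "i \<in> active x \<inter> {1..k} \<Longrightarrow> a i \<bullet> d \<le> slope x d"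
  unfolding slope_def by (rule Max_ge) auto

lemma slope_attained: "x \<in> feasible \<Longrightarrow> \<exists>i\<in>active x \<inter> {1..k}. a i \<bullet> d = slope x d"
proof -
  assume "x \<in> feasible"
  then have "slope x d \<in> (\<lambda>i. a i \<bullet> d) ` (active x \<inter> {1..k})"
    unfolding slope_def by (intro Max_in) (use active_max_nonempty in auto)
  then show ?thesis
    by auto
qed

lemma piece_less_Rmax: "x \<in> feasible \<Longrightarrow> i \<in> {1..k} \<Longrightarrow> i \<notin> active x \<Longrightarrow> piece i x < Rmax x"
  using piece_le_Rmax[of i x] active_max_iff[of x i] by force

lemma piece_less_0: "x \<in> feasible \<Longrightarrow> j \<in> {k+1..m} \<Longrightarrow> j \<notin> active x \<Longrightarrow> piece j x < 0"
  using active_con_iff[of j x] by (force simp: feasible_def)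

lemma eventually_feasible_step:
  assumes x: "x \<in> feasible" and d: "\<forall>j\<in>active x \<inter> {k+1..m}. a j \<bullet> d \<le> 0"
  shows "\<forall>\<^sub>F s in at_right 0. x + s *\<^sub>R d \<in> feasible"
proof -
  have "\<forall>\<^sub>F s in at_right 0. \<forall>j\<in>{k+1..m} - active x. s * (a j \<bullet> d) < - piece j x"
    using piece_less_0[OF x] by (intro eventually_ball_finite ballI eventually_at_right_0_mult_less) auto
  with eventually_at_right_less[of 0] show ?thesis
  proof eventually_elim
    case (elim s)
    have "piece j (x + s *\<^sub>R d) \<le> 0" if "j \<in> {k+1..m}" for j
    proof (cases "j \<in> active x")
      case True
      then show ?thesis
        using that d elim active_con_iff[of j x] by (simp add: piece_step mult_nonneg_nonpos)
    next
      case False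
      then have "s * (a j \<bullet> d) < - piece j x"
        using that elim by blast
      then show ?thesis
        by (simp add: piece_step)
    qed
    then show ?case
      by (simp add: feasible_def)
  qed
qed

lemma eventually_Rmax_step:
  assumes x: "x \<in> feasible"
  shows "\<forall>\<^sub>F s in at_right 0. Rmax (x + s *\<^sub>R d) = Rmax x + s * slope x d"
proof -
  have "\<forall>\<^sub>F s in at_right 0. \<forall>i\<in>{1..k} - active x. s * (a i \<bullet> d - slope x d) < Rmax x - piece i x"
    using piece_less_Rmax[OF x] by (intro eventually_ball_finite ballI eventually_at_right_0_mult_less) auto
  with eventually_at_right_less[of 0] show ?thesis
  proof eventually_elim
    case (elim s)
    obtain i0 where i0: "i0 \<in> active x \<inter> {1..k}" "a i0 \<bullet> d = slope x d"
      using slope_attained[OF x] by blast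
    have "piece i (x + s *\<^sub>R d) \<le> Rmax x + s * slope x d" if "i \<in> {1..k}" for i
    proof (cases "i \<in> active x")
      case True
      then show ?thesis
        using that x elim slope_ge[of i x d] active_max_iff[of x i]
        by (simp add: piece_step mult_left_mono)
    next
      case False
      then have "s * (a i \<bullet> d - slope x d) < Rmax x - piece i x"
        using that elim by blast
      then show ?thesis
        by (simp add: piece_step algebra_simps)
    qed
    then show ?case
      using i0 x active_max_iff[of x i0] by (intro Rmax_eqI[of _ _ i0]) (auto simp: piece_step)
  qed
qed

lemma feasible_step:
  assumes "x \<in> feasible" "\<forall>j\<in>active x \<inter> {k+1..m}. a j \<bullet> d \<le> 0"
  obtains s where "s > 0" "x + s *\<^sub>R d \<in> feasible" "Rmax (x + s *\<^sub>R d) = Rmax x + s * slope x d"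
  using eventually_happens'[OF trivial_limit_at_right_real eventually_conj[OF eventually_at_right_less[of 0]
      eventually_conj[OF eventually_feasible_step[OF assms] eventually_Rmax_step[OF assms(1)]]]]
  by blast

lemma fconj_ge: "y \<in> feasible \<Longrightarrow> ereal (v \<bullet> y - Rmax y) \<le> fconj R v"
  unfolding fconj_def by (rule SUP_upper2[of y]) (auto simp: R_feasible)

lemma fconj_le: "(\<And>y. y \<in> feasible \<Longrightarrow> v \<bullet> y - Rmax y \<le> c) \<Longrightarrow> fconj R v \<le> ereal c"
  unfolding fconj_def
proof (rule SUP_least)
  fix y assume "\<And>y. y \<in> feasible \<Longrightarrow> v \<bullet> y - Rmax y \<le> c"
  then show "ereal (v \<bullet> y) - R y \<le> ereal c"
    by (cases "y \<in> feasible") (auto simp: R_feasible R_infeasible)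
qed

lemma subdiff_R_infeasible: "x \<notin> feasible \<Longrightarrow> subdiff R x = {}"
  by (simp add: subdiff_def R_infeasible)

lemma subdiff_R_iff:
  assumes "x \<in> feasible"
  shows "v \<in> subdiff R x \<longleftrightarrow> (\<forall>y\<in>feasible. v \<bullet> y - Rmax y \<le> v \<bullet> x - Rmax x)"
proof -
  have "R y \<ge> ereal (Rmax x) + ereal (v \<bullet> (y - x)) \<longleftrightarrow> (y \<in> feasible \<longrightarrow> v \<bullet> y - Rmax y \<le> v \<bullet> x - Rmax x)"
    for y
    by (cases "y \<in> feasible") (auto simp: R_feasible R_infeasible inner_diff_right)
  then show ?thesis
    using assms by (simp add: subdiff_def R_feasible Ball_def)
qed

lemma fconj_eq_of_subdiff: "v \<in> subdiff R x \<Longrightarrow> fconj R v = ereal (v \<bullet> x - Rmax x)"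
  using subdiff_R_infeasible subdiff_R_iff fconj_ge fconj_le by (metis antisym empty_iff)

lemma fconj_generator_le:
  assumes "i \<in> {1..k}"
  shows "fconj R (a i) \<le> ereal (\<alpha> i)"
proof (rule fconj_le)
  fix y
  show "a i \<bullet> y - Rmax y \<le> \<alpha> i"
    using piece_le_Rmax[OF assms, of y] by (simp add: piece_def)
qed

lemma fconj_add_constraint_le:
  assumes "j \<in> {k+1..m}" "fconj R v \<le> ereal c"
  shows "fconj R (v + a j) \<le> ereal (c + \<alpha> j)"
proof (rule fconj_le)
  fix y assume y: "y \<in> feasible"
  then have "v \<bullet> y - Rmax y \<le> c"
    using order_trans[OF fconj_ge[OF y, of v] assms(2)] by simp
  moreover have "piece j y \<le> 0"
    using y assms(1) by (simp add: feasible_def)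
  ultimately show "(v + a j) \<bullet> y - Rmax y \<le> c + \<alpha> j"
    by (simp add: inner_add_left piece_def)
qed

lemma subdiff_fconj_iff:
  assumes c: "fconj R v = ereal c"
  shows "g \<in> subdiff (fconj R) v \<longleftrightarrow> g \<in> feasible \<and> v \<bullet> g - Rmax g = c"
proof -
  have sd: "g \<in> subdiff (fconj R) v \<longleftrightarrow> (\<forall>w. ereal c + ereal (g \<bullet> (w - v)) \<le> fconj R w)"
    by (simp add: subdiff_def c)
  show ?thesis
  proof
    assume "g \<in> subdiff (fconj R) v"
    then have g: "\<And>w. ereal c + ereal (g \<bullet> (w - v)) \<le> fconj R w"
      using sd by blast
    have "piece j g \<le> 0" if "j \<in> {k+1..m}" for j
      using order_trans[OF g[of "v + a j"] fconj_add_constraint_le[OF that, of v c]] c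
      by (simp add: piece_def inner_commute)
    then have feasible: "g \<in> feasible"
      by (simp add: feasible_def)
    have "piece i g \<le> g \<bullet> v - c" if "i \<in> {1..k}" for i
      using order_trans[OF g[of "a i"] fconj_generator_le[OF that]]
      by (simp add: piece_def inner_commute inner_diff_right)
    then have "Rmax g \<le> g \<bullet> v - c"
      by (rule Rmax_le)
    with fconj_ge[OF feasible, of v] c show "g \<in> feasible \<and> v \<bullet> g - Rmax g = c"
      by (simp add: feasible inner_commute)
  next
    assume "g \<in> feasible \<and> v \<bullet> g - Rmax g = c"
    then have "c + g \<bullet> (w - v) = w \<bullet> g - Rmax g" for w
      by (simp add: inner_diff_right inner_commute)
    then have "ereal c + ereal (g \<bullet> (w - v)) \<le> fconj R w" for w
      using fconj_ge[of g w] \<open>g \<in> feasible \<and> v \<bullet> g - Rmax g = c\<close> by simp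
    then show "g \<in> subdiff (fconj R) v"
      using sd by blast
  qed
qed

lemma subdiff_fconj_iff_subdiff: "g \<in> subdiff (fconj R) v \<longleftrightarrow> v \<in> subdiff R g"
proof
  assume g: "g \<in> subdiff (fconj R) v"
  then obtain c where c: "fconj R v = ereal c"
    by (cases "fconj R v") (auto simp: subdiff_def)
  then have "g \<in> feasible" "v \<bullet> g - Rmax g = c"
    using g subdiff_fconj_iff by blast+
  then show "v \<in> subdiff R g"
    using fconj_ge[of _ v] c by (simp add: subdiff_R_iff)
next
  assume v: "v \<in> subdiff R g"
  then have "g \<in> feasible"
    using subdiff_R_infeasible by blast
  then show "g \<in> subdiff (fconj R) v"
    using subdiff_fconj_iff[OF fconj_eq_of_subdiff[OF v]] by simp
qed

lemma constraint_direction_nonpos: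
  assumes i: "i \<in> K \<inter> {1..k}" and j: "j \<in> K \<inter> {k+1..m}" and bounded: "\<forall>u\<in>dual_face K. d \<bullet> u \<le> \<beta>"
  shows "a j \<bullet> d \<le> 0"
proof (rule ccontr)
  assume "\<not> a j \<bullet> d \<le> 0"
  then have pos: "a j \<bullet> d > 0"
    by simp
  define t where "t = (\<bar>\<beta> - d \<bullet> a i\<bar> + 1) / (a j \<bullet> d)"
  have "d \<bullet> (a i + t *\<^sub>R a j) \<le> \<beta>"
    using bounded ray_in_dual_face[OF i j, of t] pos by (simp add: t_def)
  moreover have "d \<bullet> (a i + t *\<^sub>R a j) = d \<bullet> a i + \<bar>\<beta> - d \<bullet> a i\<bar> + 1"
    using pos by (simp add: t_def inner_add_right inner_commute)
  ultimately show False
    by linarith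
qed

lemma dual_face_subset_subdiff_R:
  assumes x: "x \<in> feasible"
  shows "dual_face (active x) \<subseteq> subdiff R x"
proof
  fix g assume "g \<in> dual_face (active x)"
  then obtain w where g: "g = comb (active x) w" and w: "\<forall>i\<in>active x. 0 \<le> w i"
    "sum w (active x \<inter> {1..k}) = 1"
    by (auto simp: dual_face_explicit[OF active_subset])
  show "g \<in> subdiff R x"
    using comb_gap_le[OF _ active_subset w] comb_gap_eq[OF x order_refl w(2)]
    by (simp add: subdiff_R_iff[OF x] g)
qed

lemma subdiff_R_subset_dual_face:
  assumes x: "x \<in> feasible"
  shows "subdiff R x \<subseteq> dual_face (active x)"
proof
  fix g assume g: "g \<in> subdiff R x"
  show "g \<in> dual_face (active x)"
  proof (rule ccontr)
    assume "g \<notin> dual_face (active x)"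
    then obtain d0 b where "d0 \<bullet> g < b" "\<forall>u\<in>dual_face (active x). b < d0 \<bullet> u"
      using separating_hyperplane_closed_point[OF convex_dual_face closed_dual_face] by blast
    moreover define d where "d = - d0"
    ultimately have sep: "- b < g \<bullet> d" "\<forall>u\<in>dual_face (active x). d \<bullet> u < - b"
      by (auto simp: inner_commute)
    obtain i0 where "i0 \<in> active x \<inter> {1..k}"
      using active_max_nonempty[OF x] by blast
    then have "\<forall>j\<in>active x \<inter> {k+1..m}. a j \<bullet> d \<le> 0"
      using sep(2) by (intro ballI constraint_direction_nonpos[of i0 _ _ _ "- b"]) (auto intro: less_imp_le)
    then obtain s where s: "s > 0" "x + s *\<^sub>R d \<in> feasible"
      "Rmax (x + s *\<^sub>R d) = Rmax x + s * slope x d"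
      using feasible_step[OF x] by blast
    obtain i where i: "i \<in> active x \<inter> {1..k}" "a i \<bullet> d = slope x d"
      using slope_attained[OF x] by blast
    have "slope x d < - b"
      using sep(2) generator_in_dual_face[OF i(1)] i(2) by (auto simp: inner_commute)
    moreover have "g \<bullet> (x + s *\<^sub>R d) - Rmax (x + s *\<^sub>R d) \<le> g \<bullet> x - Rmax x"
      using g s(2) by (simp add: subdiff_R_iff[OF x])
    then have "g \<bullet> d \<le> slope x d"
      using s(1,3) by (simp add: inner_add_right)
    ultimately show False
      using sep(1) by linarith
  qed
qed

lemma subdiff_R_eq: "x \<in> feasible \<Longrightarrow> subdiff R x = dual_face (active x)"
  using dual_face_subset_subdiff_R subdiff_R_subset_dual_face by blast

lemma dom_subdiff_R: "dom_subdiff R = feasible"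
proof -
  have "subdiff R x \<noteq> {}" if "x \<in> feasible" for x
    using that active_max_nonempty generator_in_dual_face by (fastforce simp: subdiff_R_eq)
  then show ?thesis
    using subdiff_R_infeasible by (auto simp: dom_subdiff_def)
qed

lemma subdiff_fconj_MIs:
  assumes x0: "x0 \<in> feasible" and v: "v \<in> MIs k m a (active x0)"
  shows "subdiff (fconj R) v = face (active x0)"
proof -
  obtain w where vw: "v = comb (active x0) w" and w: "\<forall>i\<in>active x0. 0 < w i"
    "sum w (active x0 \<inter> {1..k}) = 1"
    using v by (auto simp: MIs_explicit[OF active_subset])
  define c where "c = (\<Sum>i\<in>active x0. w i * \<alpha> i)"
  have "v \<bullet> y - Rmax y \<le> c" if "y \<in> feasible" for y
    using comb_gap_le[OF that active_subset _ w(2)] w(1) by (simp add: vw c_def less_imp_le)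
  moreover have "v \<bullet> x0 - Rmax x0 = c"
    using comb_gap_eq[OF x0 order_refl w(2)] by (simp add: vw c_def)
  ultimately have "fconj R v = ereal c"
    using fconj_ge[OF x0, of v] by (intro antisym fconj_le) auto
  then show ?thesis
    using comb_gap_eq_iff[OF _ active_subset w]
    by (simp add: subdiff_fconj_iff face_def vw c_def set_eq_iff) blast
qed

lemma face_closed_convex:
  assumes "x0 \<in> feasible"
  shows "closed (face (active x0)) \<and> convex (face (active x0))"
proof -
  obtain v where "v \<in> MIs k m a (active x0)"
    using MIs_nonempty active_max_nonempty[OF assms] by blast
  then show ?thesis
    using subdiff_closed_convex subdiff_fconj_MIs[OF assms] by metis
qed

lemma face_direction:
  assumes "x \<in> face K" "y \<in> face K"
  shows "i \<in> K \<inter> {1..k} \<Longrightarrow> a i \<bullet> (y - x) = Rmax y - Rmax x"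
    and "j \<in> K \<inter> {k+1..m} \<Longrightarrow> a j \<bullet> (y - x) = 0"
proof -
  have x: "x \<in> feasible" "K \<subseteq> active x" and y: "y \<in> feasible" "K \<subseteq> active y"
    using assms by (auto simp: face_def)
  show "i \<in> K \<inter> {1..k} \<Longrightarrow> a i \<bullet> (y - x) = Rmax y - Rmax x"
    using active_max_iff[OF x(1), of i] active_max_iff[OF y(1), of i] x(2) y(2)
    by (auto simp: piece_def inner_diff_right)
  show "j \<in> K \<inter> {k+1..m} \<Longrightarrow> a j \<bullet> (y - x) = 0"
    using active_con_iff[of j x] active_con_iff[of j y] x(2) y(2)
    by (auto simp: piece_def inner_diff_right)
qed

lemma face_prolongation:
  assumes y: "y \<in> feasible" and x: "x \<in> face (active y)"
  obtains s where "s > 0" "y + s *\<^sub>R (y - x) \<in> face (active y)"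
proof -
  have yK: "y \<in> face (active y)"
    using y by (simp add: face_def)
  have "\<forall>j\<in>active y \<inter> {k+1..m}. a j \<bullet> (y - x) \<le> 0"
    using face_direction(2)[OF x yK] by simp
  then obtain s where s: "s > 0" "y + s *\<^sub>R (y - x) \<in> feasible"
    "Rmax (y + s *\<^sub>R (y - x)) = Rmax y + s * slope y (y - x)"
    using feasible_step[OF y] by blast
  obtain i where "i \<in> active y \<inter> {1..k}" "a i \<bullet> (y - x) = slope y (y - x)"
    using slope_attained[OF y] by blast
  then have slope: "slope y (y - x) = Rmax y - Rmax x"
    using face_direction(1)[OF x yK] by simp
  have "i \<in> active (y + s *\<^sub>R (y - x))" if i: "i \<in> active y" for i
  proof -
    consider "i \<in> active y \<inter> {1..k}" | "i \<in> active y \<inter> {k+1..m}"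
      using i active_subset by fastforce
    then show ?thesis
    proof cases
      case 1
      then show ?thesis
        using s(2,3) face_direction(1)[OF x yK 1] active_max_iff[OF y, of i] active_max_iff[OF s(2), of i]
        by (simp add: slope piece_step)
    next
      case 2
      then show ?thesis
        using face_direction(2)[OF x yK 2] active_con_iff[of i y] active_con_iff[of i "y + s *\<^sub>R (y - x)"]
        by (simp add: piece_step)
    qed
  qed
  then show thesis
    using that s by (auto simp: face_def)
qed

lemma mem_rel_interior_face_active:
  assumes y: "y \<in> feasible"
  shows "y \<in> rel_interior (face (active y))"
proof (rule convex_rel_interior_only_if)
  show "convex (face (active y))" "face (active y) \<noteq> {}"
    using face_closed_convex[OF y] y by (auto simp: face_def)
  show "\<forall>x\<in>face (active y). \<exists>e>1. (1 - e) *\<^sub>R x + e *\<^sub>R y \<in> face (active y)"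
  proof
    fix x assume "x \<in> face (active y)"
    then obtain s where "s > 0" "y + s *\<^sub>R (y - x) \<in> face (active y)"
      using face_prolongation[OF y] by blast
    moreover have "(1 - (1 + s)) *\<^sub>R x + (1 + s) *\<^sub>R y = y + s *\<^sub>R (y - x)"
      by (simp add: algebra_simps)
    ultimately show "\<exists>e>1. (1 - e) *\<^sub>R x + e *\<^sub>R y \<in> face (active y)"
      by (intro exI[of _ "1 + s"]) simp
  qed
qed

lemma active_subset_of_prolongation:
  assumes x0: "x0 \<in> feasible" and y: "y \<in> face (active x0)" and e: "e > 1"
    and z: "(1 - e) *\<^sub>R x0 + e *\<^sub>R y \<in> face (active x0)" (is "?z \<in> _")
  shows "active y \<subseteq> active x0"
proof
  fix i assume i: "i \<in> active y"
  have yf: "y \<in> feasible" "active x0 \<subseteq> active y" and zf: "?z \<in> feasible" "active x0 \<subseteq> active ?z"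
    using y z by (auto simp: face_def)
  show "i \<in> active x0"
  proof (rule ccontr)
    assume i0: "i \<notin> active x0"
    consider "i \<in> {1..k}" | "i \<in> {k+1..m}"
      using i active_subset by fastforce
    then show False
    proof cases
      case 1
      obtain j where j: "j \<in> active x0 \<inter> {1..k}"
        using active_max_nonempty[OF x0] by blast
      have "piece i y = piece j y" "piece j x0 = Rmax x0" "piece i ?z \<le> piece j ?z"
        using 1 i j yf zf x0 active_max_iff piece_le_Rmax by (auto simp: subset_iff)
      then show False
        using e piece_less_Rmax[OF x0 1 i0] by (simp add: piece_affine)
    next
      case 2
      have "piece i y = 0" "piece i ?z \<le> 0"
        using 2 i zf active_con_iff by (auto simp: feasible_def)
      then have "(1 - e) * piece i x0 \<le> 0"
        by (simp add: piece_affine)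
      then show False
        using e piece_less_0[OF x0 2 i0] mult_neg_neg[of "1 - e" "piece i x0"] by simp
    qed
  qed
qed

lemma active_eq_of_rel_interior_face:
  assumes x0: "x0 \<in> feasible" and y: "y \<in> rel_interior (face (active x0))"
  shows "active y = active x0"
proof -
  have yF: "y \<in> face (active x0)"
    using y rel_interior_subset by blast
  have "x0 \<in> affine hull face (active x0)"
    using x0 by (intro hull_inc) (simp add: face_def)
  then obtain e where "e > 1" "(1 - e) *\<^sub>R x0 + e *\<^sub>R y \<in> face (active x0)"
    using convex_rel_interior_if2[OF conjunct2[OF face_closed_convex[OF x0]] y] by blast
  then show ?thesis
    using active_subset_of_prolongation[OF x0 yF] yF by (auto simp: face_def)
qed

lemma rel_interior_face:
  assumes "x0 \<in> feasible"
  shows "rel_interior (face (active x0)) = MI k m a \<alpha> (active x0)"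
proof (intro set_eqI iffI)
  fix y assume y: "y \<in> rel_interior (face (active x0))"
  then have "y \<in> feasible"
    using rel_interior_subset by (auto simp: face_def)
  then show "y \<in> MI k m a \<alpha> (active x0)"
    using active_eq_of_rel_interior_face[OF assms y] by (simp add: MI_eq)
next
  fix y assume "y \<in> MI k m a \<alpha> (active x0)"
  then show "y \<in> rel_interior (face (active x0))"
    using mem_rel_interior_face_active[of y] by (simp add: MI_eq)
qed

lemma closure_MI:
  assumes "x0 \<in> feasible"
  shows "closure (MI k m a \<alpha> (active x0)) = face (active x0)"
  using face_closed_convex[OF assms] convex_closure_rel_interior closure_closed
  by (metis rel_interior_face[OF assms])

lemma piece_midpoint: "piece i (midpoint y z) = (piece i y + piece i z) / 2"
  by (simp add: midpoint_def piece_def inner_add_right field_simps)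

lemma midpoint_feasible: "y \<in> feasible \<Longrightarrow> z \<in> feasible \<Longrightarrow> midpoint y z \<in> feasible"
  unfolding feasible_def by (auto simp: piece_midpoint intro: add_nonpos_nonpos)

lemma active_midpoint_subset:
  assumes y: "y \<in> feasible" and z: "z \<in> feasible"
    and affine: "Rmax (midpoint y z) = (Rmax y + Rmax z) / 2"
  shows "active (midpoint y z) \<subseteq> active y \<inter> active z"
proof
  fix i assume i: "i \<in> active (midpoint y z)"
  have p: "midpoint y z \<in> feasible"
    using y z by (rule midpoint_feasible)
  consider "i \<in> {1..k}" | "i \<in> {k+1..m}"
    using i active_subset by fastforce
  then show "i \<in> active y \<inter> active z"
  proof cases
    case 1
    then show ?thesis
      using i affine piece_le_Rmax[OF 1, of y] piece_le_Rmax[OF 1, of z]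
        active_max_iff[OF p 1] active_max_iff[OF y 1] active_max_iff[OF z 1]
      by (simp add: piece_midpoint)
  next
    case 2
    have "piece i y \<le> 0" "piece i z \<le> 0"
      using y z 2 by (auto simp: feasible_def)
    moreover have "piece i y + piece i z = 0"
      using i active_con_iff[OF 2] by (simp add: piece_midpoint)
    ultimately show ?thesis
      using active_con_iff[OF 2] by auto
  qed
qed

text \<open>\<open>\<partial>R\<^sup>*(v)\<close> is convex and the active set of a midpoint of two of its points lies in both
  active sets, so a point with the fewest active indices has the least active set.\<close>

lemma subdiff_fconj_least_active:
  assumes g: "g \<in> subdiff (fconj R) v"
  obtains z where "z \<in> subdiff (fconj R) v" "\<And>w. w \<in> subdiff (fconj R) v \<Longrightarrow> active z \<subseteq> active w"
proof -
  obtain c where c: "fconj R v = ereal c"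
    using g by (cases "fconj R v") (auto simp: subdiff_def)
  obtain z where z: "z \<in> subdiff (fconj R) v"
    and least: "\<And>w. w \<in> subdiff (fconj R) v \<Longrightarrow> card (active z) \<le> card (active w)"
    using ex_has_least_nat[of "\<lambda>w. w \<in> subdiff (fconj R) v" g "\<lambda>w. card (active w)"] g by blast
  have "active z \<subseteq> active w" if w: "w \<in> subdiff (fconj R) v" for w
  proof -
    have "midpoint w z = (1/2) *\<^sub>R w + (1/2) *\<^sub>R z"
      by (simp add: midpoint_def scaleR_right_distrib)
    then have p: "midpoint w z \<in> subdiff (fconj R) v"
      using convexD[OF conjunct2[OF subdiff_closed_convex] w z, of "1/2" "1/2"] by simp
    have "Rmax (midpoint w z) = (Rmax w + Rmax z) / 2"
      using p w z by (simp add: subdiff_fconj_iff[OF c] midpoint_def inner_add_right field_simps)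
    then have sub: "active (midpoint w z) \<subseteq> active w \<inter> active z"
      using w z by (intro active_midpoint_subset) (simp_all add: subdiff_fconj_iff[OF c])
    moreover have "card (active (midpoint w z)) = card (active z)"
      using least[OF p] card_mono[OF finite_subset[OF active_subset]] sub
      by (metis finite_atLeastAtMost le_antisym le_inf_iff)
    ultimately have "active (midpoint w z) = active z"
      using card_subset_eq[OF finite_subset[OF active_subset]] by blast
    then show ?thesis
      using sub by blast
  qed
  then show thesis
    using that z by blast
qed

lemma sum_split_indices:
  assumes "K \<subseteq> {1..m}"
  shows "sum f K = sum f (K \<inter> {1..k}) + sum f (K \<inter> {k+1..m})"
proof -
  have "sum f K = sum f (K \<inter> {1..k} \<union> K \<inter> {k+1..m})"
    by (rule sum.cong) (use assms in auto)
  also have "\<dots> = sum f (K \<inter> {1..k}) + sum f (K \<inter> {k+1..m})"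
    by (rule sum.union_disjoint) auto
  finally show ?thesis .
qed

lemma inner_comb_split:
  assumes "K \<subseteq> {1..m}"
  shows "d \<bullet> comb K w = (\<Sum>i\<in>K \<inter> {1..k}. w i * (a i \<bullet> d)) + (\<Sum>j\<in>K \<inter> {k+1..m}. w j * (a j \<bullet> d))"
  using sum_split_indices[OF assms, of "\<lambda>i. w i * (a i \<bullet> d)"]
  by (simp add: comb_def inner_sum_right inner_commute)

lemma inner_dual_face_le_slope:
  assumes x: "x \<in> feasible" and d: "\<forall>j\<in>active x \<inter> {k+1..m}. a j \<bullet> d \<le> 0"
    and u: "u \<in> dual_face (active x)"
  shows "d \<bullet> u \<le> slope x d"
proof -
  obtain w where u: "u = comb (active x) w" and w: "\<forall>i\<in>active x. 0 \<le> w i"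
    "sum w (active x \<inter> {1..k}) = 1"
    using u by (auto simp: dual_face_explicit[OF active_subset])
  have "d \<bullet> u \<le> (\<Sum>i\<in>active x \<inter> {1..k}. w i * slope x d) + 0"
    unfolding u inner_comb_split[OF active_subset]
    using w(1) d slope_ge
    by (intro add_mono sum_mono sum_nonpos) (auto intro: mult_left_mono mult_nonneg_nonpos)
  then show ?thesis
    using w(2) by (simp flip: sum_distrib_right)
qed

lemma inner_dual_face_eq:
  assumes K: "K \<subseteq> {1..m}" and "\<forall>i\<in>K \<inter> {1..k}. a i \<bullet> d = c" "\<forall>j\<in>K \<inter> {k+1..m}. a j \<bullet> d = 0"
    and u: "u \<in> dual_face K"
  shows "d \<bullet> u = c"
proof -
  obtain w where u: "u = comb K w" and w: "sum w (K \<inter> {1..k}) = 1"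
    using u by (auto simp: dual_face_explicit[OF K])
  then show ?thesis
    using assms(2,3) by (simp add: inner_comb_split[OF K] flip: sum_distrib_right)
qed

lemma supporting_direction_flat:
  assumes z: "z \<in> feasible" and v: "v \<in> subdiff R z"
    and least: "\<And>w. w \<in> subdiff (fconj R) v \<Longrightarrow> active z \<subseteq> active w"
    and support: "\<forall>u\<in>dual_face (active z). d \<bullet> u \<le> d \<bullet> v"
  shows "\<forall>u\<in>dual_face (active z). d \<bullet> u = d \<bullet> v"
proof -
  have vC: "v \<in> dual_face (active z)"
    using v subdiff_R_eq[OF z] by simp
  obtain i0 where i0: "i0 \<in> active z \<inter> {1..k}"
    using active_max_nonempty[OF z] by blast
  have con: "\<forall>j\<in>active z \<inter> {k+1..m}. a j \<bullet> d \<le> 0"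
    using support by (intro ballI constraint_direction_nonpos[OF i0]) auto
  obtain i where i: "i \<in> active z \<inter> {1..k}" "a i \<bullet> d = slope z d"
    using slope_attained[OF z] by blast
  then have "slope z d \<le> d \<bullet> v"
    using support generator_in_dual_face[OF i(1)] by (auto simp: inner_commute)
  then have slope: "slope z d = d \<bullet> v"
    using inner_dual_face_le_slope[OF z con vC] by simp
  obtain s where s: "s > 0" "z + s *\<^sub>R d \<in> feasible" "Rmax (z + s *\<^sub>R d) = Rmax z + s * slope z d"
    using feasible_step[OF z con] by blast
  then have "z + s *\<^sub>R d \<in> subdiff (fconj R) v"
    using subdiff_fconj_iff[OF fconj_eq_of_subdiff[OF v]] by (simp add: slope inner_add_right inner_commute)
  then have active: "active z \<subseteq> active (z + s *\<^sub>R d)"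
    by (rule least)
  have "\<forall>i\<in>active z \<inter> {1..k}. a i \<bullet> d = d \<bullet> v"
    using active s z active_max_iff by (auto simp: piece_step slope)
  moreover have "\<forall>j\<in>active z \<inter> {k+1..m}. a j \<bullet> d = 0"
    using active s(1) active_con_iff by (auto simp: piece_step)
  ultimately show ?thesis
    using inner_dual_face_eq[OF active_subset] by blast
qed

lemma MIs_of_least_active:
  assumes z: "z \<in> feasible" and v: "v \<in> subdiff R z"
    and least: "\<And>w. w \<in> subdiff (fconj R) v \<Longrightarrow> active z \<subseteq> active w"
  shows "v \<in> MIs k m a (active z)"
proof (rule ccontr)
  assume "v \<notin> MIs k m a (active z)"
  moreover have vC: "v \<in> dual_face (active z)"
    using v subdiff_R_eq[OF z] by simp
  ultimately obtain d0 where "\<forall>u\<in>dual_face (active z). d0 \<bullet> v \<le> d0 \<bullet> u"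
    "\<forall>u\<in>MIs k m a (active z). d0 \<bullet> v < d0 \<bullet> u"
    using supporting_hyperplane_rel_boundary[OF convex_dual_face vC] rel_interior_dual_face by metis
  then have support: "\<forall>u\<in>dual_face (active z). (- d0) \<bullet> u \<le> (- d0) \<bullet> v"
    and strict: "\<forall>u\<in>MIs k m a (active z). (- d0) \<bullet> u < (- d0) \<bullet> v"
    by auto
  have "\<forall>u\<in>MIs k m a (active z). (- d0) \<bullet> u = (- d0) \<bullet> v"
    using supporting_direction_flat[OF z v least support] rel_interior_subset rel_interior_dual_face by blast
  then show False
    using strict MIs_nonempty[OF active_max_nonempty[OF z]] by fastforce
qed

lemma dom_subdiff_fconj: "dom_subdiff (fconj R) = (\<Union>x\<in>feasible. MIs k m a (active x))"
proof (intro set_eqI iffI)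
  fix v assume "v \<in> dom_subdiff (fconj R)"
  then obtain g where "g \<in> subdiff (fconj R) v"
    by (auto simp: dom_subdiff_def)
  then obtain z where z: "z \<in> subdiff (fconj R) v"
    and least: "\<And>w. w \<in> subdiff (fconj R) v \<Longrightarrow> active z \<subseteq> active w"
    using subdiff_fconj_least_active by blast
  then have "v \<in> subdiff R z"
    by (simp add: subdiff_fconj_iff_subdiff)
  moreover have "z \<in> feasible"
    using calculation subdiff_R_infeasible by blast
  ultimately show "v \<in> (\<Union>x\<in>feasible. MIs k m a (active x))"
    using MIs_of_least_active least by blast
next
  fix v assume "v \<in> (\<Union>x\<in>feasible. MIs k m a (active x))"
  then obtain x where "x \<in> feasible" "v \<in> MIs k m a (active x)"
    by blast
  then have "x \<in> subdiff (fconj R) v"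
    using subdiff_fconj_MIs by (simp add: face_def)
  then show "v \<in> dom_subdiff (fconj R)"
    by (auto simp: dom_subdiff_def)
qed

lemma active_subset_of_MIs_dual_face:
  assumes x: "x \<in> feasible" and y: "y \<in> feasible"
    and v: "v \<in> MIs k m a (active x)" "v \<in> dual_face (active y)"
  shows "active x \<subseteq> active y"
proof -
  have "y \<in> subdiff (fconj R) v"
    using v(2) y by (simp add: subdiff_fconj_iff_subdiff subdiff_R_eq)
  then show ?thesis
    using subdiff_fconj_MIs[OF x v(1)] by (simp add: face_def)
qed

lemma MI_Int_closure_MI:
  assumes "x \<in> feasible" "y \<in> feasible"
    and "MI k m a \<alpha> (active x) \<inter> closure (MI k m a \<alpha> (active y)) \<noteq> {}"
  shows "active y \<subseteq> active x"
  using assms(1,3) unfolding closure_MI[OF assms(2)] by (auto simp: MI_eq face_def)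

lemma MI_subset_closure_MI_iff:
  assumes "x \<in> feasible" "y \<in> feasible"
  shows "MI k m a \<alpha> (active x) \<subseteq> closure (MI k m a \<alpha> (active y)) \<longleftrightarrow> active y \<subseteq> active x"
  using assms(1) unfolding closure_MI[OF assms(2)] by (auto simp: MI_eq face_def)

lemma MIs_Int_closure_MIs:
  assumes "x \<in> feasible" "y \<in> feasible"
    and "MIs k m a (active x) \<inter> closure (MIs k m a (active y)) \<noteq> {}"
  shows "active x \<subseteq> active y"
  using assms active_subset_of_MIs_dual_face by (auto simp: closure_MIs)

lemma MIs_subset_closure_MIs_iff:
  assumes x: "x \<in> feasible" and y: "y \<in> feasible"
  shows "MIs k m a (active y) \<subseteq> closure (MIs k m a (active x)) \<longleftrightarrow> active y \<subseteq> active x"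
proof
  assume "MIs k m a (active y) \<subseteq> closure (MIs k m a (active x))"
  then show "active y \<subseteq> active x"
    using MIs_Int_closure_MIs[OF y x] MIs_nonempty[OF active_max_nonempty[OF y]] by blast
next
  assume "active y \<subseteq> active x"
  then have "dual_face (active y) \<subseteq> dual_face (active x)"
    by (rule dual_face_mono)
  then show "MIs k m a (active y) \<subseteq> closure (MIs k m a (active x))"
    using rel_interior_subset[of "dual_face (active y)"] by (simp add: closure_MIs rel_interior_dual_face)
qed

lemma JJ_R_MI:
  assumes "x0 \<in> feasible"
  shows "JJ R (MI k m a \<alpha> (active x0)) = MIs k m a (active x0)"
  using assms by (auto simp: JJ_def MI_eq subdiff_R_eq rel_interior_dual_face)

lemma JJ_fconj_MIs:
  assumes "x0 \<in> feasible"
  shows "JJ (fconj R) (MIs k m a (active x0)) = MI k m a \<alpha> (active x0)"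
  using assms MIs_nonempty[OF active_max_nonempty[OF assms]]
  by (auto simp: JJ_def subdiff_fconj_MIs rel_interior_face)

lemma MI_nonempty_iff: "MI k m a \<alpha> K \<noteq> {} \<longleftrightarrow> K \<in> active ` feasible"
  by (auto simp: MI_eq)

lemma strata_eq_image: "{S K | K. K \<subseteq> {1..m} \<and> MI k m a \<alpha> K \<noteq> {}} = S ` active ` feasible"
proof (intro set_eqI iffI)
  fix M assume "M \<in> {S K | K. K \<subseteq> {1..m} \<and> MI k m a \<alpha> K \<noteq> {}}"
  then obtain K where "M = S K" "MI k m a \<alpha> K \<noteq> {}"
    by blast
  then show "M \<in> S ` active ` feasible"
    unfolding MI_nonempty_iff by blast
next
  fix M assume "M \<in> S ` active ` feasible"
  then obtain x where "x \<in> feasible" "M = S (active x)"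
    by blast
  then show "M \<in> {S K | K. K \<subseteq> {1..m} \<and> MI k m a \<alpha> K \<noteq> {}}"
    using active_subset MI_nonempty_iff by blast
qed

lemma finite_active_image: "finite (active ` feasible)"
  by (rule finite_subset[of _ "Pow {1..m}"]) (use active_subset in auto)

lemma stratification_MI: "is_stratification feasible (MI k m a \<alpha> ` active ` feasible)"
proof (rule is_stratification_image)
  show "finite (active ` feasible)"
    by (rule finite_active_image)
  show "(\<Union>K\<in>active ` feasible. MI k m a \<alpha> K) = feasible"
    by (auto simp: MI_eq)
  show "MI k m a \<alpha> K \<noteq> {}" if "K \<in> active ` feasible" for K
    using that by (auto simp: MI_eq)
  show "MI k m a \<alpha> K = MI k m a \<alpha> K'"
    if "K \<in> active ` feasible" "K' \<in> active ` feasible" "MI k m a \<alpha> K \<inter> MI k m a \<alpha> K' \<noteq> {}" for K K'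
    using that by (auto simp: MI_eq)
  show "MI k m a \<alpha> K \<subseteq> closure (MI k m a \<alpha> K')"
    if "K \<in> active ` feasible" "K' \<in> active ` feasible" "MI k m a \<alpha> K \<inter> closure (MI k m a \<alpha> K') \<noteq> {}"
    for K K'
    using that MI_Int_closure_MI MI_subset_closure_MI_iff by blast
qed

lemma stratification_MIs: "is_stratification (dom_subdiff (fconj R)) (MIs k m a ` active ` feasible)"
proof (rule is_stratification_image)
  show "finite (active ` feasible)"
    by (rule finite_active_image)
  show "(\<Union>K\<in>active ` feasible. MIs k m a K) = dom_subdiff (fconj R)"
    by (simp add: dom_subdiff_fconj)
  show "MIs k m a K \<noteq> {}" if "K \<in> active ` feasible" for K
    using that MIs_nonempty active_max_nonempty by blast
  show "MIs k m a K = MIs k m a K'"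
    if K: "K \<in> active ` feasible" "K' \<in> active ` feasible"
      and meet: "MIs k m a K \<inter> MIs k m a K' \<noteq> {}" for K K'
  proof -
    obtain x x' where "x \<in> feasible" "x' \<in> feasible" "K = active x" "K' = active x'"
      using K by blast
    moreover have "MIs k m a K \<inter> closure (MIs k m a K') \<noteq> {}" "MIs k m a K' \<inter> closure (MIs k m a K) \<noteq> {}"
      using meet closure_subset by blast+
    ultimately show ?thesis
      using MIs_Int_closure_MIs by (metis subset_antisym)
  qed
  show "MIs k m a K \<subseteq> closure (MIs k m a K')"
    if "K \<in> active ` feasible" "K' \<in> active ` feasible" "MIs k m a K \<inter> closure (MIs k m a K') \<noteq> {}"
    for K K'
    using that MIs_Int_closure_MIs MIs_subset_closure_MIs_iff by blast
qed

lemma mirror_stratifiable_R: "mirror_stratifiable R (MI k m a \<alpha> ` active ` feasible) (MIs k m a ` active ` feasible)"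
proof (rule mirror_stratifiable_image)
  show "is_stratification (dom_subdiff R) (MI k m a \<alpha> ` active ` feasible)"
    using stratification_MI by (simp add: dom_subdiff_R)
  show "is_stratification (dom_subdiff (fconj R)) (MIs k m a ` active ` feasible)"
    by (rule stratification_MIs)
  show "JJ R (MI k m a \<alpha> K) = MIs k m a K" "JJ (fconj R) (MIs k m a K) = MI k m a \<alpha> K"
    if "K \<in> active ` feasible" for K
    using that JJ_R_MI JJ_fconj_MIs by blast+
  show "MI k m a \<alpha> K \<subseteq> closure (MI k m a \<alpha> K') \<longleftrightarrow> MIs k m a K' \<subseteq> closure (MIs k m a K)"
    if "K \<in> active ` feasible" "K' \<in> active ` feasible" for K K'
    using that MI_subset_closure_MI_iff MIs_subset_closure_MIs_iff by blast
qed

end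

theorem proposition2p2:
  fixes k m :: nat and a :: "nat \<Rightarrow> 'a::euclidean_space" and \<alpha> :: "nat \<Rightarrow> real"
  assumes "1 \<le> k" and "k \<le> m"
    and "edom (polyR k m a \<alpha>) \<noteq> {}"
  shows "is_stratification (edom (polyR k m a \<alpha>))
           {MI k m a \<alpha> I | I. I \<subseteq> {1..m} \<and> MI k m a \<alpha> I \<noteq> {}}
       \<and> (\<forall>I. I \<subseteq> {1..m} \<and> MI k m a \<alpha> I \<noteq> {} \<longrightarrow>
              JJ (polyR k m a \<alpha>) (MI k m a \<alpha> I) = MIs k m a I \<and>
              JJ (fconj (polyR k m a \<alpha>)) (MIs k m a I) = MI k m a \<alpha> I)
       \<and> mirror_stratifiable (polyR k m a \<alpha>)
           {MI k m a \<alpha> I | I. I \<subseteq> {1..m} \<and> MI k m a \<alpha> I \<noteq> {}}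
           {MIs k m a I | I. I \<subseteq> {1..m} \<and> MI k m a \<alpha> I \<noteq> {}}"
proof -
  interpret polyhedral_function k m a \<alpha>
    using assms(1,2) by unfold_locales
  show ?thesis
    unfolding strata_eq_image edom_R
  proof (intro conjI allI impI)
    show "is_stratification feasible (MI k m a \<alpha> ` active ` feasible)"
      by (rule stratification_MI)
    show "mirror_stratifiable R (MI k m a \<alpha> ` active ` feasible) (MIs k m a ` active ` feasible)"
      by (rule mirror_stratifiable_R)
    fix I assume "I \<subseteq> {1..m} \<and> MI k m a \<alpha> I \<noteq> {}"
    then obtain x where "x \<in> feasible" "I = active x"
      unfolding MI_nonempty_iff by blast
    then show "JJ R (MI k m a \<alpha> I) = MIs k m a I" "JJ (fconj R) (MIs k m a I) = MI k m a \<alpha> I"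
      by (simp_all add: JJ_R_MI JJ_fconj_MIs)
  qed
qed

end
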